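(* Let $d\in\mathbb{N}$, $\mathsf{H}_{\mathbb{R}}=\mathbb{R}^d$ with a strongly continuous orthogonal group $(U_t)_{t\in\mathbb{R}}$, $\mathsf{M}=\Gamma_q(\mathsf{H}_{\mathbb{R}},U_t)$. Let $\{e_i\}_{1\le i\le d}$ and $\{f_i\}_{1\le i\le d}$ be two linearly independent sets in $\mathsf{H}=\mathbb{C}^d$ such that $f_j=\sum_{k=1}^d x_{jk}e_k$ for some $x_{jk}\in\mathbb{C}$, $j=1,\dots,d$. Let $A_i=W(e_i)$ and $C_i=W(f_i)$. Then a (normalized) dual system for $(A_1,\dots,A_d)$ exists if and only if one for $(C_1,\dots,C_d)$ exists.
   Context: Fix $q\in(-1,1)$; inner products are linear in the second variable. $\mathsf{H}$ is the complexification of $\mathsf{H}_{\mathbb{R}}$, $A$ the generator of $(U_t)$ ($U_t=A^{it}$), $\langle\xi,\eta\rangle_U=\langle\xi,\frac{2A}{1+A}\eta\rangle$. $\mathcal{F}_q(\mathsf{H}_U)$ is the $q$-Fock space over $(\mathsf{H},\langle\cdot,\cdot\rangle_U)$ with vacuum $\Omega$, $\mathcal{F}_q(\mathsf{H}_U)_{\mathrm{alg}}$ the span of finite tensors; $l^*(\xi)$ the creation operator, $s(\xi)=l^*(\xi)+l^*(\xi)^*$, $\Gamma_q(\mathsf{H}_{\mathbb{R}},U_t)=\{s(\xi):\xi\in\mathsf{H}_{\mathbb{R}}\}''$, $\varphi=\langle\Omega,\cdot\,\Omega\rangle$. For $\xi\in\mathcal{F}_q(\mathsf{H}_U)_{\mathrm{alg}}$,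 $W(\xi)\in\mathsf{M}$ is the unique element with $W(\xi)\Omega=\xi$. A (normalized) dual system for $(A_1,\dots,A_d)$ (where $A_i=W(e_i)$) is a tuple $(D_1,\dots,D_d)$ of unbounded operators on $\mathcal{F}_q(\mathsf{H}_U)$ whose domains contain $\mathcal{F}_q(\mathsf{H}_U)_{\mathrm{alg}}$ and whose adjoints contain $\Omega$ in their domains, such that $D_i\Omega=0$ and $[D_i,A_j]=\langle\bar e_j,e_i\rangle_U P_{\mathbb{C}\Omega}$ for all $i,j$, with $\bar\xi$ the complex conjugate in $\mathbb{C}^d$ and $P_{\mathbb{C}\Omega}$ the projection onto $\mathbb{C}\Omega$. *)

theory Defs
  imports "HOL-Analysis.Analysis"
begin

definition cinner :: "complex^'d \<Rightarrow> complex^'d \<Rightarrow> complex" where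
  "cinner x y = (\<Sum>k\<in>UNIV. cnj (x$k) * y$k)"

definition conjv :: "complex^'d \<Rightarrow> complex^'d" where
  "conjv x = (\<chi> k. cnj (x$k))"
definition rev_part :: "complex^'d \<Rightarrow> complex^'d" where
  "rev_part x = (\<chi> k. complex_of_real (Re (x$k)))"
definition imv :: "complex^'d \<Rightarrow> complex^'d" where
  "imv x = (\<chi> k. complex_of_real (Im (x$k)))"

definition orth_group :: "(real \<Rightarrow> real^'d \<Rightarrow> real^'d) \<Rightarrow> bool" where
  "orth_group U \<longleftrightarrow>
     (\<forall>t. linear (U t)) \<and> (\<forall>t x y. inner (U t x) (U t y) = inner x y) \<and>
     U 0 = id \<and> (\<forall>s t. U (s + t) = U s \<circ> U t) \<and>
     (\<forall>x. continuous_on UNIV (\<lambda>t. U t x))"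

definition Uc :: "(real \<Rightarrow> real^'d \<Rightarrow> real^'d) \<Rightarrow> real \<Rightarrow> complex^'d \<Rightarrow> complex^'d" where
  "Uc U t x = (\<chi> k. complex_of_real ((U t (\<chi> j. Re (x$j)))$k)
                     + \<i> * complex_of_real ((U t (\<chi> j. Im (x$j)))$k))"

text \<open>A is the (analytic) generator of U: A is a positive non-singular self-adjoint
  matrix (given by its spectral decomposition) with A^{it} = U_t (functional calculus).\<close>
definition is_generator :: "(real \<Rightarrow> real^'d \<Rightarrow> real^'d) \<Rightarrow> complex^'d^'d \<Rightarrow> bool" where
  "is_generator U A \<longleftrightarrow>
     (\<exists>(v :: 'd \<Rightarrow> complex^'d) (lam :: 'd \<Rightarrow> real).
        (\<forall>k l. cinner (v k) (v l) = (if k = l then 1 else 0)) \<and>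
        (\<forall>k. lam k > 0) \<and>
        (\<forall>y. A *v y = (\<Sum>k\<in>UNIV. (complex_of_real (lam k) * cinner (v k) y) *s v k)) \<and>
        (\<forall>t y. Uc U t y = (\<Sum>k\<in>UNIV. (cis (t * ln (lam k)) * cinner (v k) y) *s v k)))"

definition minv :: "complex^'d^'d \<Rightarrow> complex^'d^'d" where
  "minv B = (THE M. M ** B = mat 1 \<and> B ** M = mat 1)"

definition innerU :: "complex^'d^'d \<Rightarrow> complex^'d \<Rightarrow> complex^'d \<Rightarrow> complex" where
  "innerU A x y = cinner x ((A ** minv (mat 1 + A)) *v ((2::complex) *s y))"

text \<open>An element of the algebraic q-Fock space is a finitely supported coefficient
  function on words: the word [i1,...,in] stands for the elementary tensor
  delta_{i1} (x) ... (x) delta_{in} of standard basis vectors of C^d; [] stands for Omega.\<close>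
type_synonym 'd fock = "'d list \<Rightarrow> complex"

definition falg :: "'d fock \<Rightarrow> bool" where
  "falg x \<longleftrightarrow> finite {w. x w \<noteq> 0}"

definition vac :: "'d fock" where
  "vac w = (if w = [] then 1 else 0)"

definition inv_count :: "nat \<Rightarrow> (nat \<Rightarrow> nat) \<Rightarrow> nat" where
  "inv_count n p = card {(i, j). i < j \<and> j < n \<and> p j < p i}"

definition qip_word :: "real \<Rightarrow> complex^'d^'d \<Rightarrow> 'd list \<Rightarrow> 'd list \<Rightarrow> complex" where
  "qip_word q A w w' =
     (if length w = length w' then
        (\<Sum>p\<in>{p. p permutes {..<length w}}.
           complex_of_real (q ^ inv_count (length w) p) *
           (\<Prod>k<length w. innerU A (axis (w!k) 1) (axis (w'!(p k)) 1)))
      else 0)"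

definition qip :: "real \<Rightarrow> complex^'d^'d \<Rightarrow> 'd fock \<Rightarrow> 'd fock \<Rightarrow> complex" where
  "qip q A x y = (\<Sum>w\<in>{w. x w \<noteq> 0}. \<Sum>w'\<in>{w'. y w' \<noteq> 0}.
                    cnj (x w) * y w' * qip_word q A w w')"

definition qnorm :: "real \<Rightarrow> complex^'d^'d \<Rightarrow> 'd fock \<Rightarrow> real" where
  "qnorm q A x = sqrt (Re (qip q A x x))"

definition lvl1 :: "complex^'d \<Rightarrow> 'd fock" where
  "lvl1 \<xi> w = (case w of [i] \<Rightarrow> \<xi>$i | _ \<Rightarrow> 0)"

definition cre :: "complex^'d \<Rightarrow> 'd fock \<Rightarrow> 'd fock" where
  "cre \<xi> x w = (case w of [] \<Rightarrow> 0 | i # w' \<Rightarrow> \<xi>$i * x w')"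

text \<open>Its adjoint l(xi) = l*(xi)^* w.r.t. the q-inner product:
  eta1..etan |-> sum_k q^(k-1) <xi, eta_k>_U eta1..(omit k)..etan.\<close>
definition ann :: "real \<Rightarrow> complex^'d^'d \<Rightarrow> complex^'d \<Rightarrow> 'd fock \<Rightarrow> 'd fock" where
  "ann q A \<xi> x v = (\<Sum>k\<le>length v. \<Sum>i\<in>UNIV.
       complex_of_real (q ^ k) * innerU A \<xi> (axis i 1) * x (take k v @ i # drop k v))"

definition sop :: "real \<Rightarrow> complex^'d^'d \<Rightarrow> complex^'d \<Rightarrow> 'd fock \<Rightarrow> 'd fock" where
  "sop q A h x w = cre h x w + ann q A h x w"

text \<open>W(xi) for xi in H: W(xi) = s(Re xi) + i s(Im xi) (the element of M with W(xi) Omega = xi),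
  acting on the algebraic Fock space; and its adjoint W(xi)^* = s(Re xi) - i s(Im xi).\<close>
definition Wop :: "real \<Rightarrow> complex^'d^'d \<Rightarrow> complex^'d \<Rightarrow> 'd fock \<Rightarrow> 'd fock" where
  "Wop q A \<xi> x w = sop q A (rev_part \<xi>) x w + \<i> * sop q A (imv \<xi>) x w"

definition Wadj :: "real \<Rightarrow> complex^'d^'d \<Rightarrow> complex^'d \<Rightarrow> 'd fock \<Rightarrow> 'd fock" where
  "Wadj q A \<xi> x w = sop q A (rev_part \<xi>) x w - \<i> * sop q A (imv \<xi>) x w"

text \<open>D i is an operator with domain F_alg into the completion F_q(H_U); a vector v of
  F_q(H_U) is represented (Riesz) by the bounded antilinear functional eta |-> <eta, v>_q on
  the dense subspace F_alg.  So  D i xi eta = <eta, D_i xi>_q.\<close>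
definition dual_system ::
  "real \<Rightarrow> complex^'d^'d \<Rightarrow> ('d \<Rightarrow> complex^'d) \<Rightarrow> ('d \<Rightarrow> 'd fock \<Rightarrow> 'd fock \<Rightarrow> complex) \<Rightarrow> bool" where
  "dual_system q A e D \<longleftrightarrow>
    (\<forall>i.
      \<comment> \<open>D_i xi is a vector of F_q: bounded antilinear functional on F_alg\<close>
      (\<forall>\<xi>. falg \<xi> \<longrightarrow>
          (\<forall>a b \<eta> \<eta>'. falg \<eta> \<longrightarrow> falg \<eta>' \<longrightarrow>
              D i \<xi> (\<lambda>w. a * \<eta> w + b * \<eta>' w) = cnj a * D i \<xi> \<eta> + cnj b * D i \<xi> \<eta>') \<and>
          (\<exists>C. \<forall>\<eta>. falg \<eta> \<longrightarrow> cmod (D i \<xi> \<eta>) \<le> C * qnorm q A \<eta>)) \<and>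
      \<comment> \<open>D_i is linear on its domain F_alg\<close>
      (\<forall>a b \<xi> \<xi>' \<eta>. falg \<xi> \<longrightarrow> falg \<xi>' \<longrightarrow> falg \<eta> \<longrightarrow>
          D i (\<lambda>w. a * \<xi> w + b * \<xi>' w) \<eta> = a * D i \<xi> \<eta> + b * D i \<xi>' \<eta>) \<and>
      \<comment> \<open>Omega in the domain of D_i^*\<close>
      (\<exists>C. \<forall>\<xi>. falg \<xi> \<longrightarrow> cmod (D i \<xi> vac) \<le> C * qnorm q A \<xi>) \<and>
      \<comment> \<open>D_i Omega = 0\<close>
      (\<forall>\<eta>. falg \<eta> \<longrightarrow> D i vac \<eta> = 0) \<and>
      \<comment> \<open>[D_i, A_j] = <conj e_j, e_i>_U P_Omega on F_alg, A_j = W(e_j)\<close>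
      (\<forall>j \<xi> \<eta>. falg \<xi> \<longrightarrow> falg \<eta> \<longrightarrow>
          D i (Wop q A (e j) \<xi>) \<eta> - D i \<xi> (Wadj q A (e j) \<eta>)
            = innerU A (conjv (e j)) (e i) * qip q A \<eta> vac * qip q A vac \<xi>))"

definition clin_indep :: "('d \<Rightarrow> complex^'d) \<Rightarrow> bool" where
  "clin_indep e \<longleftrightarrow> (\<forall>c :: 'd \<Rightarrow> complex. (\<Sum>k\<in>UNIV. c k *s e k) = 0 \<longrightarrow> (\<forall>k. c k = 0))"

end

theory Submission
  imports Defs
begin

(* If D is a dual system for the A_k and f_j = sum_k x_jk e_k, then D'_i = sum_k x_ik D_k is one
   for the C_j. Indeed W(xi) = l*(xi) + l(conj xi) is complex linear in xi and W(xi)^* antilinear,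
   so [D'_i, C_j] = sum_{k,l} x_ik x_jl [D_k, A_l], and by sesquilinearity of <.,.>_U the sum of the
   coefficients <conj e_l, e_k>_U is <conj f_j, f_i>_U. For the converse, the d independent
   vectors f_i form a basis of C^d, so every e_j is a combination of the f_k and the same argument
   applies. *)

lemma combination_eq_matrix_vector_mult:
  fixes e :: "'n::finite \<Rightarrow> 'a::comm_semiring_1^'m"
  shows "(\<Sum>k\<in>UNIV. c $ k *s e k) = (\<chi> i k. e k $ i) *v c"
  unfolding vec_eq_iff matrix_vector_mult_def by (simp add: sum.cong[OF refl mult.commute])

lemma clin_indep_spans:
  fixes e :: "'d \<Rightarrow> complex^'d"
  assumes "clin_indep e"
  shows "\<exists>c. v = (\<Sum>k\<in>UNIV. c k *s e k)"
proof -
  let ?E = "(\<chi> i k. e k $ i) :: complex^'d^'d"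
  have "inj ((*v) ?E)"
  proof (rule injI)
    fix c c' :: "complex^'d"
    assume "?E *v c = ?E *v c'"
    then have "(\<Sum>k\<in>UNIV. (c - c') $ k *s e k) = 0"
      unfolding combination_eq_matrix_vector_mult by (simp add: matrix_vector_mult_diff_distrib)
    then have "\<forall>k. (c - c') $ k = 0"
      using assms unfolding clin_indep_def by blast
    then show "c = c'"
      by (simp add: vec_eq_iff)
  qed
  then have "surj ((*v) ?E)"
    by (rule vec.linear_inj_imp_surj[OF vec.linear_axioms])
  then obtain c where "v = ?E *v c" by blast
  then show ?thesis
    by (metis combination_eq_matrix_vector_mult)
qed

lemma linear_form_sum:
  fixes F :: "'a::comm_semiring_1^'n \<Rightarrow> 'a"
  assumes "\<And>h. F h = (\<Sum>a\<in>UNIV. h $ a * G a)"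
  shows "F (\<Sum>l\<in>L. c l *s g l) = (\<Sum>l\<in>L. c l * F (g l))"
proof -
  have "F (\<Sum>l\<in>L. c l *s g l) = (\<Sum>a\<in>UNIV. \<Sum>l\<in>L. c l * (g l $ a * G a))"
    by (simp add: assms sum_distrib_right mult.assoc)
  also have "\<dots> = (\<Sum>l\<in>L. c l * F (g l))"
    by (subst sum.swap) (simp add: assms sum_distrib_left)
  finally show ?thesis .
qed

lemma antilinear_form_sum:
  fixes F :: "complex^'n \<Rightarrow> complex"
  assumes "\<And>h. F h = (\<Sum>a\<in>UNIV. cnj (h $ a) * G a)"
  shows "F (\<Sum>l\<in>L. c l *s g l) = (\<Sum>l\<in>L. cnj (c l) * F (g l))"
proof -
  have "F (\<Sum>l\<in>L. c l *s g l) = (\<Sum>a\<in>UNIV. \<Sum>l\<in>L. cnj (c l) * (cnj (g l $ a) * G a))"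
    by (simp add: assms sum_distrib_right mult.assoc)
  also have "\<dots> = (\<Sum>l\<in>L. cnj (c l) * F (g l))"
    by (subst sum.swap) (simp add: assms sum_distrib_left)
  finally show ?thesis .
qed

lemma conjv_sum: "conjv (\<Sum>l\<in>L. c l *s g l) = (\<Sum>l\<in>L. cnj (c l) *s conjv (g l))"
  by (simp add: conjv_def vec_eq_iff)

lemma innerU_sum_left:
  "innerU A (\<Sum>l\<in>L. c l *s g l) y = (\<Sum>l\<in>L. cnj (c l) * innerU A (g l) y)"
  by (rule antilinear_form_sum) (simp add: innerU_def cinner_def)

lemma innerU_sum_right:
  "innerU A h (\<Sum>l\<in>L. c l *s g l) = (\<Sum>l\<in>L. c l * innerU A h (g l))"
proof (rule linear_form_sum)
  fix y :: "complex^'a"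
  show "innerU A h y
      = (\<Sum>b\<in>UNIV. y $ b * (\<Sum>k\<in>UNIV. cnj (h $ k) * ((A ** minv (mat 1 + A)) $ k $ b * 2)))"
    unfolding innerU_def cinner_def matrix_vector_mult_def
    by (simp add: sum_distrib_left sum_distrib_right mult_ac) (rule sum.swap)
qed

lemma cre_sum: "cre (\<Sum>l\<in>L. c l *s g l) x w = (\<Sum>l\<in>L. c l * cre (g l) x w)"
proof (rule linear_form_sum)
  fix h :: "complex^'a"
  show "cre h x w = (\<Sum>a\<in>UNIV. h $ a * (case w of [] \<Rightarrow> 0 | i # w' \<Rightarrow> if a = i then x w' else 0))"
    by (cases w) (simp_all add: cre_def if_distrib[of "(*) _"] cong: if_cong)
qed

lemma ann_sum:
  "ann q A (\<Sum>l\<in>L. c l *s g l) x v = (\<Sum>l\<in>L. cnj (c l) * ann q A (g l) x v)"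
proof -
  have "ann q A (\<Sum>l\<in>L. c l *s g l) x v = (\<Sum>k\<le>length v. \<Sum>i\<in>UNIV. \<Sum>l\<in>L. cnj (c l) *
      (complex_of_real (q ^ k) * innerU A (g l) (axis i 1) * x (take k v @ i # drop k v)))"
    by (simp add: ann_def innerU_sum_left sum_distrib_left sum_distrib_right mult_ac)
  also have "\<dots> = (\<Sum>l\<in>L. cnj (c l) * ann q A (g l) x v)"
    unfolding ann_def sum_distrib_left by (subst sum.swap, subst (2) sum.swap) (rule refl)
  finally show ?thesis .
qed

lemma cre_coords: "cre h x w = (\<Sum>a\<in>UNIV. h $ a * cre (axis a 1) x w)"
  using cre_sum[of "\<lambda>a. h $ a" "\<lambda>a. axis a 1" UNIV] by (simp add: basis_expansion)

lemma ann_coords: "ann q A h x v = (\<Sum>a\<in>UNIV. cnj (h $ a) * ann q A (axis a 1) x v)"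
  using ann_sum[of q A "\<lambda>a. h $ a" "\<lambda>a. axis a 1" UNIV] by (simp add: basis_expansion)

lemma cre_re_im:
  "cre h x w = cre (rev_part h) x w + \<i> * cre (imv h) x w"
  "cre (conjv h) x w = cre (rev_part h) x w - \<i> * cre (imv h) x w"
proof -
  define C where "C a = cre (axis a 1) x w" for a
  have cre: "cre v x w = (\<Sum>a\<in>UNIV. v $ a * C a)" for v
    unfolding C_def by (rule cre_coords)
  show "cre h x w = cre (rev_part h) x w + \<i> * cre (imv h) x w"
       "cre (conjv h) x w = cre (rev_part h) x w - \<i> * cre (imv h) x w"
    unfolding cre rev_part_def imv_def conjv_def
      sum_distrib_left sum.distrib[symmetric] sum_subtractf[symmetric]
    by (rule sum.cong; simp add: complex_eq_iff)+
qed

lemma ann_re_im: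
  "ann q A h x w = ann q A (rev_part h) x w - \<i> * ann q A (imv h) x w"
  "ann q A (conjv h) x w = ann q A (rev_part h) x w + \<i> * ann q A (imv h) x w"
proof -
  define N where "N a = ann q A (axis a 1) x w" for a
  have ann: "ann q A v x w = (\<Sum>a\<in>UNIV. cnj (v $ a) * N a)" for v
    unfolding N_def by (rule ann_coords)
  show "ann q A h x w = ann q A (rev_part h) x w - \<i> * ann q A (imv h) x w"
       "ann q A (conjv h) x w = ann q A (rev_part h) x w + \<i> * ann q A (imv h) x w"
    unfolding ann rev_part_def imv_def conjv_def
      sum_distrib_left sum.distrib[symmetric] sum_subtractf[symmetric]
    by (rule sum.cong; simp add: complex_eq_iff)+
qed

lemma Wop_eq_cre_ann: "Wop q A \<xi> x w = cre \<xi> x w + ann q A (conjv \<xi>) x w"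
  unfolding Wop_def sop_def cre_re_im(1)[of \<xi>] ann_re_im(2)[of q A \<xi>]
  by (simp add: algebra_simps)

lemma Wadj_eq_cre_ann: "Wadj q A \<xi> x w = cre (conjv \<xi>) x w + ann q A \<xi> x w"
  unfolding Wadj_def sop_def cre_re_im(2)[of \<xi>] ann_re_im(1)[of q A \<xi>]
  by (simp add: algebra_simps)

lemma Wop_sum: "Wop q A (\<Sum>l\<in>L. c l *s g l) \<xi> w = (\<Sum>l\<in>L. c l * Wop q A (g l) \<xi> w)"
  by (simp add: Wop_eq_cre_ann cre_sum conjv_sum ann_sum sum.distrib distrib_left)

lemma Wadj_sum: "Wadj q A (\<Sum>l\<in>L. c l *s g l) \<xi> w = (\<Sum>l\<in>L. cnj (c l) * Wadj q A (g l) \<xi> w)"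
  by (simp add: Wadj_eq_cre_ann cre_sum conjv_sum ann_sum sum.distrib distrib_left)

lemma falg_iff_length_bounded:
  fixes x :: "'d::finite fock"
  shows "falg x \<longleftrightarrow> (\<exists>n. \<forall>w. n < length w \<longrightarrow> x w = 0)"
proof
  assume "falg x"
  then obtain n where "\<forall>m \<in> length ` {w. x w \<noteq> 0}. m \<le> n"
    unfolding falg_def by (metis finite_imageI finite_nat_set_iff_bounded_le)
  then show "\<exists>n. \<forall>w. n < length w \<longrightarrow> x w = 0"
    by (auto simp: not_less[symmetric])
next
  assume "\<exists>n. \<forall>w. n < length w \<longrightarrow> x w = 0"
  then obtain n where "{w. x w \<noteq> 0} \<subseteq> {w. length w \<le> n}"
    by (auto simp: not_less[symmetric])
  then show "falg x"
    unfolding falg_def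
    by (rule finite_subset) (use finite_lists_length_le[of "UNIV :: 'd set" n] in simp)
qed

lemma falg_vac: "falg vac"
  unfolding falg_def vac_def by (rule finite_subset[of _ "{[]}"]) auto

lemma falg_lincomb: "falg \<xi> \<Longrightarrow> falg \<xi>' \<Longrightarrow> falg (\<lambda>w. a * \<xi> w + b * \<xi>' w)"
  unfolding falg_def
  by (rule finite_subset[of _ "{w. \<xi> w \<noteq> 0} \<union> {w. \<xi>' w \<noteq> 0}"]) auto

lemma falg_sum: "(\<And>l. l \<in> L \<Longrightarrow> falg (g l)) \<Longrightarrow> falg (\<lambda>w. \<Sum>l\<in>L. c l * g l w)"
proof (induction L rule: infinite_finite_induct)
  case (insert l L)
  then show ?case
    using falg_lincomb[of "g l" "\<lambda>w. \<Sum>l\<in>L. c l * g l w" "c l" 1] by simp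
qed (simp_all add: falg_def)

lemma falg_cre:
  assumes "falg x" shows "falg (cre h x)"
proof -
  obtain n where n: "\<And>w. n < length w \<Longrightarrow> x w = 0"
    using assms unfolding falg_iff_length_bounded by blast
  have "cre h x w = 0" if "Suc n < length w" for w
    using n that by (auto simp: cre_def split: list.split)
  then show ?thesis
    unfolding falg_iff_length_bounded by blast
qed

lemma falg_ann:
  assumes "falg x" shows "falg (ann q A h x)"
proof -
  obtain n where n: "\<And>w. n < length w \<Longrightarrow> x w = 0"
    using assms unfolding falg_iff_length_bounded by blast
  have "ann q A h x v = 0" if "n < length v" for v
    using n that by (auto simp: ann_def intro!: sum.neutral)
  then show ?thesis
    unfolding falg_iff_length_bounded by blast
qed

lemma falg_Wop: "falg x \<Longrightarrow> falg (Wop q A h x)"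
  using falg_lincomb[OF falg_cre[of x h] falg_ann[of x q A "conjv h"], of 1 1]
  by (simp add: Wop_eq_cre_ann[abs_def])

lemma falg_Wadj: "falg x \<Longrightarrow> falg (Wadj q A h x)"
  using falg_lincomb[OF falg_cre[of x "conjv h"] falg_ann[of x q A h], of 1 1]
  by (simp add: Wadj_eq_cre_ann[abs_def])

lemma dual_system_linear:
  "dual_system q A e D \<Longrightarrow> falg \<xi> \<Longrightarrow> falg \<xi>' \<Longrightarrow> falg \<eta> \<Longrightarrow>
    D i (\<lambda>w. a * \<xi> w + b * \<xi>' w) \<eta> = a * D i \<xi> \<eta> + b * D i \<xi>' \<eta>"
  unfolding dual_system_def by blast

lemma dual_system_antilinear:
  "dual_system q A e D \<Longrightarrow> falg \<xi> \<Longrightarrow> falg \<eta> \<Longrightarrow> falg \<eta>' \<Longrightarrow>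
    D i \<xi> (\<lambda>w. a * \<eta> w + b * \<eta>' w) = cnj a * D i \<xi> \<eta> + cnj b * D i \<xi> \<eta>'"
  unfolding dual_system_def by blast

lemma dual_system_linear_sum:
  assumes ds: "dual_system q A e D" and g: "\<And>l. l \<in> L \<Longrightarrow> falg (g l)" and \<eta>: "falg \<eta>"
  shows "D i (\<lambda>w. \<Sum>l\<in>L. c l * g l w) \<eta> = (\<Sum>l\<in>L. c l * D i (g l) \<eta>)"
  using g
proof (induction L rule: infinite_finite_induct)
  case (insert l L)
  have "falg (g l)" "falg (\<lambda>w. \<Sum>l\<in>L. c l * g l w)"
    using insert.prems by (auto intro: falg_sum)
  from dual_system_linear[OF ds this \<eta>, of i "c l" 1] show ?case
    using insert by simp
  \<comment> \<open>for empty or infinite L the sum is the zero vector 0 * vac + 0 * vac\<close>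
qed (use dual_system_linear[OF ds falg_vac falg_vac \<eta>, of i 0 0] in simp_all)

lemma dual_system_antilinear_sum:
  assumes ds: "dual_system q A e D" and g: "\<And>l. l \<in> L \<Longrightarrow> falg (g l)" and \<xi>: "falg \<xi>"
  shows "D i \<xi> (\<lambda>w. \<Sum>l\<in>L. c l * g l w) = (\<Sum>l\<in>L. cnj (c l) * D i \<xi> (g l))"
  using g
proof (induction L rule: infinite_finite_induct)
  case (insert l L)
  have "falg (g l)" "falg (\<lambda>w. \<Sum>l\<in>L. c l * g l w)"
    using insert.prems by (auto intro: falg_sum)
  from dual_system_antilinear[OF ds \<xi> this, of i "c l" 1] show ?case
    using insert by simp
qed (use dual_system_antilinear[OF ds \<xi> falg_vac falg_vac, of i 0 0] in simp_all)

lemma relatively_bounded_sum: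
  fixes F :: "'k \<Rightarrow> 'a \<Rightarrow> complex"
  assumes "\<And>k. k \<in> K \<Longrightarrow> \<exists>C. \<forall>\<eta>. P \<eta> \<longrightarrow> cmod (F k \<eta>) \<le> C * N \<eta>"
  shows "\<exists>C. \<forall>\<eta>. P \<eta> \<longrightarrow> cmod (\<Sum>k\<in>K. y k * F k \<eta>) \<le> C * N \<eta>"
proof -
  have "\<forall>k\<in>K. \<exists>C. \<forall>\<eta>. P \<eta> \<longrightarrow> cmod (F k \<eta>) \<le> C * N \<eta>"
    using assms by blast
  from bchoice[OF this] obtain C where C: "\<And>k \<eta>. k \<in> K \<Longrightarrow> P \<eta> \<Longrightarrow> cmod (F k \<eta>) \<le> C k * N \<eta>"
    by blast
  have "cmod (\<Sum>k\<in>K. y k * F k \<eta>) \<le> (\<Sum>k\<in>K. cmod (y k) * C k) * N \<eta>" if "P \<eta>" for \<eta>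
  proof -
    have "cmod (\<Sum>k\<in>K. y k * F k \<eta>) \<le> (\<Sum>k\<in>K. cmod (y k) * cmod (F k \<eta>))"
      unfolding norm_mult[symmetric] by (rule norm_sum)
    also have "\<dots> \<le> (\<Sum>k\<in>K. cmod (y k) * (C k * N \<eta>))"
      by (intro sum_mono mult_left_mono C that) simp_all
    finally show ?thesis
      by (simp add: sum_distrib_right mult.assoc)
  qed
  then show ?thesis by blast
qed

lemma innerU_conjv_combination:
  assumes "\<And>j. f j = (\<Sum>k\<in>UNIV. y j k *s e k)"
  shows "innerU A (conjv (f j)) (f i)
    = (\<Sum>k\<in>UNIV. \<Sum>l\<in>UNIV. y i k * (y j l * innerU A (conjv (e l)) (e k)))"
  by (simp add: assms conjv_sum innerU_sum_left innerU_sum_right sum_distrib_left)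

lemma dual_system_commutator_combination:
  assumes ds: "dual_system q A e D" and f: "\<And>j. f j = (\<Sum>k\<in>UNIV. y j k *s e k)"
    and \<xi>: "falg \<xi>" and \<eta>: "falg \<eta>"
  shows "(\<Sum>k\<in>UNIV. y i k * D k (Wop q A (f j) \<xi>) \<eta>) - (\<Sum>k\<in>UNIV. y i k * D k \<xi> (Wadj q A (f j) \<eta>))
    = innerU A (conjv (f j)) (f i) * qip q A \<eta> vac * qip q A vac \<xi>"
proof -
  define P where "P = qip q A \<eta> vac * qip q A vac \<xi>"
  have Wop: "Wop q A (f j) \<xi> = (\<lambda>w. \<Sum>l\<in>UNIV. y j l * Wop q A (e l) \<xi> w)"
    by (rule ext) (simp add: f Wop_sum)
  have Wadj: "Wadj q A (f j) \<eta> = (\<lambda>w. \<Sum>l\<in>UNIV. cnj (y j l) * Wadj q A (e l) \<eta> w)"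
    by (rule ext) (simp add: f Wadj_sum)
  have comm: "D k (Wop q A (e l) \<xi>) \<eta> - D k \<xi> (Wadj q A (e l) \<eta>)
      = innerU A (conjv (e l)) (e k) * P" for k l
    using ds \<xi> \<eta> unfolding dual_system_def P_def by (simp add: mult.assoc)
  have "(\<Sum>k\<in>UNIV. y i k * D k (Wop q A (f j) \<xi>) \<eta>) - (\<Sum>k\<in>UNIV. y i k * D k \<xi> (Wadj q A (f j) \<eta>))
      = (\<Sum>k\<in>UNIV. \<Sum>l\<in>UNIV. y i k * y j l * (D k (Wop q A (e l) \<xi>) \<eta> - D k \<xi> (Wadj q A (e l) \<eta>)))"
    unfolding Wop Wadj
    by (simp add: dual_system_linear_sum[OF ds] dual_system_antilinear_sum[OF ds]
        falg_Wop falg_Wadj \<xi> \<eta> sum_distrib_left sum_subtractf[symmetric] algebra_simps)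
  also have "\<dots> = innerU A (conjv (f j)) (f i) * P"
    by (subst innerU_conjv_combination[OF f]) (simp add: comm sum_distrib_right mult.assoc)
  finally show ?thesis
    unfolding P_def by (simp add: mult.assoc)
qed

lemma dual_system_combination:
  fixes e f :: "'d \<Rightarrow> complex^'d" and D :: "'d \<Rightarrow> 'd fock \<Rightarrow> 'd fock \<Rightarrow> complex"
  assumes ds: "dual_system q A e D" and f: "\<And>j. f j = (\<Sum>k\<in>UNIV. y j k *s e k)"
  shows "dual_system q A f (\<lambda>i \<xi> \<eta>. \<Sum>k\<in>UNIV. y i k * D k \<xi> \<eta>)"
  unfolding dual_system_def
proof (intro allI conjI impI)
  fix i a b and \<xi> \<eta> \<eta>' :: "'d fock"
  assume "falg \<xi>" "falg \<eta>" "falg \<eta>'"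
  then have "D k \<xi> (\<lambda>w. a * \<eta> w + b * \<eta>' w) = cnj a * D k \<xi> \<eta> + cnj b * D k \<xi> \<eta>'" for k
    by (rule dual_system_antilinear[OF ds])
  then show "(\<Sum>k\<in>UNIV. y i k * D k \<xi> (\<lambda>w. a * \<eta> w + b * \<eta>' w))
      = cnj a * (\<Sum>k\<in>UNIV. y i k * D k \<xi> \<eta>) + cnj b * (\<Sum>k\<in>UNIV. y i k * D k \<xi> \<eta>')"
    by (simp add: sum.distrib sum_distrib_left distrib_left mult.left_commute)
next
  fix i and \<xi> :: "'d fock"
  assume "falg \<xi>"
  then show "\<exists>C. \<forall>\<eta>. falg \<eta> \<longrightarrow> cmod (\<Sum>k\<in>UNIV. y i k * D k \<xi> \<eta>) \<le> C * qnorm q A \<eta>"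
    using ds unfolding dual_system_def by (intro relatively_bounded_sum) blast
next
  fix i a b and \<xi> \<xi>' \<eta> :: "'d fock"
  assume "falg \<xi>" "falg \<xi>'" "falg \<eta>"
  then have "D k (\<lambda>w. a * \<xi> w + b * \<xi>' w) \<eta> = a * D k \<xi> \<eta> + b * D k \<xi>' \<eta>" for k
    by (rule dual_system_linear[OF ds])
  then show "(\<Sum>k\<in>UNIV. y i k * D k (\<lambda>w. a * \<xi> w + b * \<xi>' w) \<eta>)
      = a * (\<Sum>k\<in>UNIV. y i k * D k \<xi> \<eta>) + b * (\<Sum>k\<in>UNIV. y i k * D k \<xi>' \<eta>)"
    by (simp add: sum.distrib sum_distrib_left distrib_left mult.left_commute)
next
  fix i
  show "\<exists>C. \<forall>\<xi>. falg \<xi> \<longrightarrow> cmod (\<Sum>k\<in>UNIV. y i k * D k \<xi> vac) \<le> C * qnorm q A \<xi>"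
    using ds unfolding dual_system_def by (intro relatively_bounded_sum) blast
next
  fix i and \<eta> :: "'d fock"
  assume "falg \<eta>"
  then show "(\<Sum>k\<in>UNIV. y i k * D k vac \<eta>) = 0"
    using ds unfolding dual_system_def by simp
next
  fix i j and \<xi> \<eta> :: "'d fock"
  assume "falg \<xi>" "falg \<eta>"
  then show "(\<Sum>k\<in>UNIV. y i k * D k (Wop q A (f j) \<xi>) \<eta>)
      - (\<Sum>k\<in>UNIV. y i k * D k \<xi> (Wadj q A (f j) \<eta>))
      = innerU A (conjv (f j)) (f i) * qip q A \<eta> vac * qip q A vac \<xi>"
    by (rule dual_system_commutator_combination[OF ds f])
qed

theorem lemma1p2:
  fixes q :: real
    and U :: "real \<Rightarrow> real^'d \<Rightarrow> real^'d"
    and A :: "complex^'d^'d"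
    and e f :: "'d \<Rightarrow> complex^'d"
    and x :: "'d \<Rightarrow> 'd \<Rightarrow> complex"
  assumes "-1 < q" and "q < 1"
    and "orth_group U"
    and "is_generator U A"
    and "clin_indep e" and "clin_indep f"
    and "\<And>j. f j = (\<Sum>k\<in>UNIV. x j k *s e k)"
  shows "(\<exists>D. dual_system q A e D) \<longleftrightarrow> (\<exists>D. dual_system q A f D)"
proof
  assume "\<exists>D. dual_system q A e D"
  then obtain D where D: "dual_system q A e D" ..
  have "dual_system q A f (\<lambda>i \<xi> \<eta>. \<Sum>k\<in>UNIV. x i k * D k \<xi> \<eta>)"
    by (rule dual_system_combination[OF D assms(7)])
  then show "\<exists>D. dual_system q A f D" by blast
next
  assume "\<exists>D. dual_system q A f D"
  then obtain D where D: "dual_system q A f D" ..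
  have "\<forall>j. \<exists>c. e j = (\<Sum>k\<in>UNIV. c k *s f k)"
    using clin_indep_spans[OF assms(6)] by blast
  then obtain z where z: "\<forall>j. e j = (\<Sum>k\<in>UNIV. z j k *s f k)"
    by (rule choice[THEN exE])
  have "dual_system q A e (\<lambda>i \<xi> \<eta>. \<Sum>k\<in>UNIV. z i k * D k \<xi> \<eta>)"
    by (rule dual_system_combination[OF D]) (use z in blast)
  then show "\<exists>D. dual_system q A e D" by blast
qed

end
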